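(* Let $\mathcal Y=\{1,\dots,n\}$, $c\in(0,1)$ constant, $\mathcal H_{\rm all}$, $\mathcal R_{\rm all}$ the families of all measurable functions $\mathcal X\times\mathcal Y\to\mathbb R$ and $\mathcal X\to\mathbb R$. Let $\ell$ be a multi-class surrogate loss and $\Phi$ non-increasing with $\Phi(t)\ge1_{t\le0}$. Assume there are non-decreasing concave $\Gamma_1,\Gamma_2$ such that for all distributions, all $h\in\mathcal H_{\rm all}$ and $r\in\mathcal R_{\rm all}$: $\mathcal E_{\ell_{0-1}}(h)-\mathcal E^*_{\ell_{0-1}}(\mathcal H_{\rm all})\le\Gamma_1(\mathcal E_\ell(h)-\mathcal E^*_\ell(\mathcal H_{\rm all}))$ (distributions over $\mathcal X\times\mathcal Y$) and $\mathcal E_{\ell^{\rm binary}_{0-1}}(r)-\mathcal E^*_{\ell^{\rm binary}_{0-1}}(\mathcal R_{\rm all})\le\Gamma_2(\mathcal E_\Phi(r)-\mathcal E^*_\Phi(\mathcal R_{\rm all}))$ (distributions over $\mathcal X\times\{-1,+1\}$). Then for all $h\in\mathcal H_{\rm all}$, $r\in\mathcal R_{\rm all}$ and any distribution over $\mathcal X\times\mathcal Y$, $$\mathcal E_{\mathsf L_{\rm abs}}(h,r)-\mathcal E^*_{\mathsf L_{\rm abs}}(\mathcal H_{\rm all},\mathcal R_{\rm all})\le\Gamma_1\big(\mathcal E_\ell(h)-\mathcal E^*_\ell(\mathcal H_{\rm all})\big)+(1+c)\Gamma_2\Big(\big(\mathcal E_{\ell_{\Phi,h}}(r)-\mathcal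 E^*_{\ell_{\Phi,h}}(\mathcal R_{\rm all})\big)/c\Big),$$ where, when $\Gamma_2$ is linear, the bound holds with the constant factors $(1+c)$ and $1/c$ removed.
   Context: $\mathsf h(x)=\arg\max_y h(x,y)$ with fixed tie-breaking. $\ell_{0-1}(h,x,y)=1_{\mathsf h(x)\ne y}$; $\mathsf L_{\rm abs}(h,r,x,y)=1_{\mathsf h(x)\ne y}1_{r(x)>0}+c\,1_{r(x)\le0}$; $\ell_{\Phi,h}(r,x,y)=1_{\mathsf h(x)\ne y}\Phi(-r(x))+c\,\Phi(r(x))$. For $y\in\{-1,+1\}$: $\ell^{\rm binary}_{0-1}(r,x,y)=1_{y\ne\mathrm{sign}(r(x))}$, $\mathrm{sign}(t)=1_{t>0}-1_{t\le0}$, $\Phi$-loss $\Phi(yr(x))$. $\mathcal E$ denotes expected loss and $\mathcal E^*$ its infimum over the indicated set(s). *)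

theory Defs
  imports "HOL-Probability.Probability"
begin

definition hpred :: "nat \<Rightarrow> ('x \<Rightarrow> nat \<Rightarrow> real) \<Rightarrow> 'x \<Rightarrow> nat" where
  "hpred n h x = (LEAST y. y \<in> {1..n} \<and> (\<forall>y'\<in>{1..n}. h x y' \<le> h x y))"

text \<open>All measurable functions X x Y -> R (extended by 0 outside X x Y, so that
  they correspond bijectively to measurable functions on X x Y).\<close>
definition Hall :: "'x measure \<Rightarrow> nat \<Rightarrow> ('x \<Rightarrow> nat \<Rightarrow> real) set" where
  "Hall MX n = {h. (\<forall>y\<in>{1..n}. (\<lambda>x. h x y) \<in> borel_measurable MX) \<and>
                   (\<forall>x y. x \<notin> space MX \<or> y \<notin> {1..n} \<longrightarrow> h x y = 0)}"

definition Rall :: "'x measure \<Rightarrow> ('x \<Rightarrow> real) set" where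
  "Rall MX = {r. r \<in> borel_measurable MX \<and> (\<forall>x. x \<notin> space MX \<longrightarrow> r x = 0)}"

definition multi_dist :: "'x measure \<Rightarrow> nat \<Rightarrow> ('x \<times> nat) measure \<Rightarrow> bool" where
  "multi_dist MX n D \<longleftrightarrow> prob_space D \<and> sets D = sets (MX \<Otimes>\<^sub>M count_space {1..n})"

definition bin_dist :: "'x measure \<Rightarrow> ('x \<times> int) measure \<Rightarrow> bool" where
  "bin_dist MX B \<longleftrightarrow> prob_space B \<and> sets B = sets (MX \<Otimes>\<^sub>M count_space {-1, 1})"

definition eloss :: "('a \<times> 'b) measure \<Rightarrow> ('a \<Rightarrow> 'b \<Rightarrow> real) \<Rightarrow> ennreal" where
  "eloss D f = (\<integral>\<^sup>+ z. ennreal (f (fst z) (snd z)) \<partial>D)"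

definition excess :: "('a \<times> 'b) measure \<Rightarrow> 'i set \<Rightarrow> ('i \<Rightarrow> 'a \<Rightarrow> 'b \<Rightarrow> real) \<Rightarrow> 'i \<Rightarrow> real" where
  "excess D S L i = enn2real (eloss D (L i)) - enn2real (INF j\<in>S. eloss D (L j))"

definition zo_loss :: "nat \<Rightarrow> ('x \<Rightarrow> nat \<Rightarrow> real) \<Rightarrow> 'x \<Rightarrow> nat \<Rightarrow> real" where
  "zo_loss n h x y = (if hpred n h x \<noteq> y then 1 else 0)"

definition sgn01 :: "real \<Rightarrow> int" where
  "sgn01 t = (if t > 0 then 1 else -1)"

definition bin_zo_loss :: "('x \<Rightarrow> real) \<Rightarrow> 'x \<Rightarrow> int \<Rightarrow> real" where
  "bin_zo_loss r x y = (if y \<noteq> sgn01 (r x) then 1 else 0)"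

definition phi_loss :: "(real \<Rightarrow> real) \<Rightarrow> ('x \<Rightarrow> real) \<Rightarrow> 'x \<Rightarrow> int \<Rightarrow> real" where
  "phi_loss \<Phi> r x y = \<Phi> (real_of_int y * r x)"

definition abs_loss :: "nat \<Rightarrow> real \<Rightarrow> ('x \<Rightarrow> nat \<Rightarrow> real) \<times> ('x \<Rightarrow> real) \<Rightarrow> 'x \<Rightarrow> nat \<Rightarrow> real" where
  "abs_loss n c hr x y =
     (if hpred n (fst hr) x \<noteq> y \<and> snd hr x > 0 then 1 else 0) + (if snd hr x \<le> 0 then c else 0)"

definition lphi_loss :: "nat \<Rightarrow> real \<Rightarrow> (real \<Rightarrow> real) \<Rightarrow> ('x \<Rightarrow> nat \<Rightarrow> real) \<Rightarrow> ('x \<Rightarrow> real) \<Rightarrow> 'x \<Rightarrow> nat \<Rightarrow> real" where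
  "lphi_loss n c \<Phi> h r x y = (if hpred n h x \<noteq> y then 1 else 0) * \<Phi> (- r x) + c * \<Phi> (r x)"

end

theory Submission
  imports Defs
begin

(* Split the excess abstention loss at (h, r) into the excess over rejectors with h fixed plus the
   gap between the best rejector for h and the joint optimum.  The gap is at most the excess 0-1
   loss of h: for any (g, r'), the classifier that follows g where r' accepts and h where r'
   abstains shows  inf_r' L(h, r') + inf_g E_01(g) <= L(g, r') + E_01(h).
   For fixed h, L_abs(h, .) and l_{Phi,h} are, up to the factor Z = c + E_01(h) in [c, 1 + c],
   the binary 0-1 loss and the Phi-loss of the rejector under the distribution on X x {-1, +1}
   that gives label +1 weight c and label -1 weight 1[h(x) <> y].  The binary bound there turns
   the excess l_{Phi,h}-loss e of r into the bound Z * G2 (e / Z), which is at most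
   (1 + c) * G2 (e / c) since G2 is monotone, and equals G2 e when G2 is linear. *)

lemma measurable_hpred [measurable]:
  assumes "h \<in> Hall MX n"
  shows "hpred n h \<in> measurable MX (count_space UNIV)"
proof -
  have [measurable]: "(\<lambda>x. h x y) \<in> borel_measurable MX" if "y \<in> {1..n}" for y
    using assms that by (auto simp: Hall_def)
  have "Measurable.pred MX (\<lambda>x. y \<in> {1..n} \<and> (\<forall>y'\<in>{1..n}. h x y' \<le> h x y))" for y
    by (cases "y \<in> {1..n}") simp_all
  then show ?thesis
    unfolding hpred_def by (rule measurable_Least)
qed

lemma borel_measurable_antimono:
  fixes f :: "real \<Rightarrow> real"
  assumes "antimono f"
  shows "f \<in> borel_measurable borel"
proof -
  have "mono (\<lambda>t. f (- t))"
    using assms by (auto simp: mono_def antimono_def)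
  then have "(\<lambda>t. f (- t)) \<in> borel_measurable borel"
    by (rule borel_measurable_mono)
  then have "(\<lambda>t. f (- (- t))) \<in> borel_measurable borel"
    by measurable
  then show ?thesis by simp
qed

lemma pred_count_space_eq [measurable (raw)]:
  fixes f g :: "'a \<Rightarrow> 'b::countable"
  assumes [measurable]: "f \<in> measurable M (count_space UNIV)" "g \<in> measurable M (count_space UNIV)"
  shows "Measurable.pred M (\<lambda>z. f z = g z)"
proof -
  have "Measurable.pred M (\<lambda>z. \<exists>y. f z = y \<and> g z = y)"
    by measurable
  then show ?thesis by simp
qed

lemma measurable_snd_count_space [measurable]:
  "snd \<in> measurable (M \<Otimes>\<^sub>M count_space A) (count_space UNIV)"
  by (rule measurable_compose[OF measurable_snd]) simp

lemma borel_measurable_Rall: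
  "r \<in> Rall MX \<Longrightarrow> r \<in> borel_measurable MX"
  by (simp add: Rall_def)

lemma measurable_multi_dist_iff:
  "multi_dist MX n D \<Longrightarrow> measurable D N = measurable (MX \<Otimes>\<^sub>M count_space {1..n}) N"
  by (simp add: multi_dist_def cong: measurable_cong_sets)

lemma measurable_zo_loss:
  assumes "h \<in> Hall MX n" "multi_dist MX n D"
  shows "(\<lambda>z. zo_loss n h (fst z) (snd z)) \<in> borel_measurable D"
  using assms(1) unfolding measurable_multi_dist_iff[OF assms(2)] zo_loss_def
  by measurable

lemma measurable_abs_loss:
  assumes "h \<in> Hall MX n" "r \<in> Rall MX" "multi_dist MX n D"
  shows "(\<lambda>z. abs_loss n c (h, r) (fst z) (snd z)) \<in> borel_measurable D"
proof -
  note [measurable] = borel_measurable_Rall[OF assms(2)]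
  show ?thesis
    using assms(1) unfolding measurable_multi_dist_iff[OF assms(3)] abs_loss_def prod.sel
    by measurable
qed

lemma measurable_bin_zo_loss:
  assumes "r \<in> Rall MX"
  shows "(\<lambda>z. bin_zo_loss r (fst z) (snd z)) \<in> borel_measurable (MX \<Otimes>\<^sub>M count_space {-1, 1})"
proof -
  note [measurable] = borel_measurable_Rall[OF assms]
  show ?thesis unfolding bin_zo_loss_def sgn01_def by measurable
qed

lemma measurable_phi_loss:
  assumes "antimono \<Phi>" "r \<in> Rall MX"
  shows "(\<lambda>z. phi_loss \<Phi> r (fst z) (snd z)) \<in> borel_measurable (MX \<Otimes>\<^sub>M count_space {-1, 1})"
proof -
  note [measurable] = borel_measurable_Rall[OF assms(2)] borel_measurable_antimono[OF assms(1)]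
  show ?thesis unfolding phi_loss_def by measurable
qed

lemma eloss_le_const:
  assumes "prob_space D" "\<And>x y. f x y \<le> K"
  shows "eloss D f \<le> ennreal K"
proof -
  interpret prob_space D by fact
  have "eloss D f \<le> (\<integral>\<^sup>+z. ennreal K \<partial>D)"
    unfolding eloss_def by (intro nn_integral_mono ennreal_leI assms(2))
  then show ?thesis by (simp add: emeasure_space_1)
qed

lemma eloss_add:
  assumes [measurable]: "(\<lambda>z. f (fst z) (snd z)) \<in> borel_measurable D"
    "(\<lambda>z. g (fst z) (snd z)) \<in> borel_measurable D"
    and "\<And>x y. 0 \<le> f x y" "\<And>x y. 0 \<le> g x y"
  shows "eloss D f + eloss D g = eloss D (\<lambda>x y. f x y + g x y)"
  unfolding eloss_def using assms(3,4)
  by (subst nn_integral_add[symmetric]) simp_all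

lemma excess_nonneg:
  assumes "i \<in> S" "eloss D (L i) < \<infinity>"
  shows "0 \<le> excess D S L i"
proof -
  have "(INF j\<in>S. eloss D (L j)) \<le> eloss D (L i)"
    by (rule INF_lower) fact
  then show ?thesis
    using assms(2) by (simp add: excess_def enn2real_mono)
qed

lemma ennreal_cmult_INF:
  assumes "0 < k"
  shows "ennreal k * (INF i\<in>S. X i) = (INF i\<in>S. ennreal k * X i)"
proof -
  have "ennreal (1 / k) * ennreal k = 1" "ennreal k * ennreal (1 / k) = 1"
    using assms by (simp_all flip: ennreal_mult'')
  then have "ennreal (1 / k) * (ennreal k * x) = x" "ennreal k * (ennreal (1 / k) * x) = x" for x
    by (simp_all flip: mult.assoc)
  then have "bij (\<lambda>x. ennreal k * x)"
    by (intro o_bij[of "\<lambda>x. ennreal (1 / k) * x"]) (simp_all add: fun_eq_iff)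
  then show ?thesis
    using mono_bij_Inf[of "\<lambda>x. ennreal k * x" "X ` S"]
    by (simp add: mono_def mult_left_mono image_comp)
qed

lemma excess_rescale:
  assumes "0 < k" "i \<in> S" "\<And>j. j \<in> S \<Longrightarrow> eloss B (L j) = ennreal k * eloss D (M j)"
  shows "excess B S L i = k * excess D S M i"
proof -
  have "(INF j\<in>S. eloss B (L j)) = ennreal k * (INF j\<in>S. eloss D (M j))"
    using assms by (simp add: ennreal_cmult_INF)
  then show ?thesis
    using assms by (simp add: excess_def enn2real_mult right_diff_distrib)
qed

lemma zo_loss_nonneg: "0 \<le> zo_loss n h x y"
  by (simp add: zo_loss_def)

lemma abs_loss_nonneg: "0 \<le> c \<Longrightarrow> 0 \<le> abs_loss n c j x y"
  by (simp add: abs_loss_def)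

lemma eloss_zo_loss_le:
  "multi_dist MX n D \<Longrightarrow> eloss D (zo_loss n h) \<le> 1"
  using eloss_le_const[of D "zo_loss n h" 1] by (simp add: multi_dist_def zo_loss_def)

lemma eloss_zo_loss_finite:
  assumes "multi_dist MX n D"
  shows "eloss D (zo_loss n h) < \<infinity>"
  unfolding infinity_ennreal_def
  using eloss_zo_loss_le[OF assms] ennreal_one_less_top by (rule le_less_trans)

lemma eloss_abs_loss_finite:
  "multi_dist MX n D \<Longrightarrow> eloss D (abs_loss n c j) < \<infinity>"
  using eloss_le_const[of D "abs_loss n c j" "1 + \<bar>c\<bar>"] ennreal_less_top
  by (fastforce simp: multi_dist_def abs_loss_def intro: le_less_trans)

lemma hpred_if:
  "hpred n (\<lambda>x y. if P x then g x y else h x y) x = (if P x then hpred n g x else hpred n h x)"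
  by (simp add: hpred_def)

lemma Hall_if:
  assumes "g \<in> Hall MX n" "h \<in> Hall MX n" "r \<in> Rall MX"
  shows "(\<lambda>x y. if 0 < r x then g x y else h x y) \<in> Hall MX n"
  using assms by (auto simp: Hall_def Rall_def intro!: measurable_If)

lemma abs_loss_add_zo_loss_swap:
  "abs_loss n c (h, r) x y + zo_loss n (\<lambda>x y. if 0 < r x then g x y else h x y) x y
     = abs_loss n c (g, r) x y + zo_loss n h x y"
  by (simp add: abs_loss_def zo_loss_def hpred_if)

lemma INF_abs_loss_add_INF_zo_loss_le:
  assumes c: "0 \<le> c" and D: "multi_dist MX n D" and h: "h \<in> Hall MX n"
  shows "(INF r\<in>Rall MX. eloss D (abs_loss n c (h, r))) + (INF g\<in>Hall MX n. eloss D (zo_loss n g))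
           \<le> (INF j\<in>Hall MX n \<times> Rall MX. eloss D (abs_loss n c j)) + eloss D (zo_loss n h)"
    (is "?I1 + ?Izo \<le> ?I0 + ?Zh")
proof -
  note nonneg = abs_loss_nonneg[OF c] zo_loss_nonneg
  have Zh_finite: "?Zh \<noteq> \<top>"
    using eloss_zo_loss_finite[OF D, of h] by auto
  have "?I1 + ?Izo - ?Zh \<le> eloss D (abs_loss n c (g, r))"
    if g: "g \<in> Hall MX n" and r: "r \<in> Rall MX" for g r
  proof -
    let ?g' = "\<lambda>x y. if 0 < r x then g x y else h x y"
    have "?I1 + ?Izo \<le> eloss D (abs_loss n c (h, r)) + eloss D (zo_loss n ?g')"
      using r Hall_if[OF g h r] by (intro add_mono INF_lower)
    also have "\<dots> = eloss D (\<lambda>x y. abs_loss n c (h, r) x y + zo_loss n ?g' x y)"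
      using D h r Hall_if[OF g h r]
      by (intro eloss_add measurable_abs_loss measurable_zo_loss nonneg)
    also have "\<dots> = eloss D (\<lambda>x y. abs_loss n c (g, r) x y + zo_loss n h x y)"
      by (simp only: abs_loss_add_zo_loss_swap)
    also have "\<dots> = eloss D (abs_loss n c (g, r)) + ?Zh"
      using D g h r
      by (intro eloss_add[symmetric] measurable_abs_loss measurable_zo_loss nonneg)
    finally show ?thesis
      using Zh_finite by (simp add: ennreal_minus_le_iff add.commute)
  qed
  then have "?I1 + ?Izo - ?Zh \<le> ?I0"
    by (auto intro: INF_greatest)
  then show ?thesis
    using Zh_finite by (simp add: ennreal_minus_le_iff add.commute)
qed

lemma excess_abs_loss_le:
  assumes c: "0 \<le> c" and D: "multi_dist MX n D" and h: "h \<in> Hall MX n" and r: "r \<in> Rall MX"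
  shows "excess D (Hall MX n \<times> Rall MX) (abs_loss n c) (h, r)
           \<le> excess D (Rall MX) (\<lambda>r'. abs_loss n c (h, r')) r + excess D (Hall MX n) (zo_loss n) h"
proof -
  let ?I1 = "INF r'\<in>Rall MX. eloss D (abs_loss n c (h, r'))"
  let ?Izo = "INF g\<in>Hall MX n. eloss D (zo_loss n g)"
  let ?I0 = "INF j\<in>Hall MX n \<times> Rall MX. eloss D (abs_loss n c j)"
  note A_finite = eloss_abs_loss_finite[OF D] and Zo_finite = eloss_zo_loss_finite[OF D]
  have "?I1 < \<top>" "?I0 < \<top>" "?Izo < \<top>"
    using h r A_finite Zo_finite by (auto intro: INF_lower le_less_trans)
  moreover have "enn2real (?I1 + ?Izo) \<le> enn2real (?I0 + eloss D (zo_loss n h))"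
    using INF_abs_loss_add_INF_zo_loss_le[OF c D h] Zo_finite
    by (intro enn2real_mono) (simp_all add: calculation)
  ultimately show ?thesis
    using Zo_finite by (simp add: excess_def enn2real_plus)
qed

definition rejection_measure ::
    "'x measure \<Rightarrow> ('x \<times> 'y) measure \<Rightarrow> real \<Rightarrow> ('x \<Rightarrow> 'y \<Rightarrow> real) \<Rightarrow> ('x \<times> int) measure"
  where "rejection_measure MX D c w =
    distr (density (D \<Otimes>\<^sub>M count_space {-1, 1})
        (\<lambda>q. ennreal (if snd q = 1 then c else w (fst (fst q)) (snd (fst q)))))
      (MX \<Otimes>\<^sub>M count_space {-1, 1}) (\<lambda>q. (fst (fst q), snd q))"

lemma sets_rejection_measure [simp, measurable_cong]:
  "sets (rejection_measure MX D c w) = sets (MX \<Otimes>\<^sub>M count_space {-1, 1})"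
  by (simp add: rejection_measure_def)

lemma eloss_rejection_measure:
  assumes D: "sigma_finite_measure D" "sets D = sets (MX \<Otimes>\<^sub>M N)"
    and w [measurable]: "(\<lambda>z. w (fst z) (snd z)) \<in> borel_measurable D"
    and L [measurable]: "(\<lambda>z. L (fst z) (snd z)) \<in> borel_measurable (MX \<Otimes>\<^sub>M count_space {-1, 1})"
    and nonneg: "0 \<le> c" "\<And>x y. 0 \<le> w x y" "\<And>x s. 0 \<le> L x s"
  shows "eloss (rejection_measure MX D c w) L = eloss D (\<lambda>x y. c * L x 1 + w x y * L x (-1))"
proof -
  let ?P = "D \<Otimes>\<^sub>M count_space {-1, 1 :: int}"
  let ?W = "\<lambda>q. ennreal (if snd q = 1 then c else w (fst (fst q)) (snd (fst q)))"
  interpret D: sigma_finite_measure D by (rule D(1))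
  interpret C: finite_measure "count_space {-1, 1 :: int}" by (rule finite_measure_count_space) simp
  interpret P: pair_sigma_finite D "count_space {-1, 1 :: int}" ..
  have [measurable]: "fst \<in> measurable D MX"
    unfolding measurable_cong_sets[OF D(2) refl] by simp
  have forget_y [measurable]: "(\<lambda>q. (fst (fst q), snd q)) \<in> measurable ?P (MX \<Otimes>\<^sub>M count_space {-1, 1})"
    by measurable
  have [measurable]: "(\<lambda>q. L (fst (fst q)) (snd q)) \<in> borel_measurable ?P"
    using measurable_compose[OF forget_y L] by simp
  have "eloss (rejection_measure MX D c w) L
      = (\<integral>\<^sup>+q. ennreal (L (fst (fst q)) (snd q)) \<partial>density ?P ?W)"
    unfolding eloss_def rejection_measure_def
    by (subst nn_integral_distr) (simp_all add: measurable_cong_sets[OF sets_density refl])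
  also have "\<dots> = (\<integral>\<^sup>+q. ?W q * ennreal (L (fst (fst q)) (snd q)) \<partial>?P)"
    by (rule nn_integral_density) measurable
  also have "\<dots> = (\<integral>\<^sup>+z. \<integral>\<^sup>+s. ?W (z, s) * ennreal (L (fst z) s) \<partial>count_space {-1, 1} \<partial>D)"
    by (subst C.nn_integral_fst[symmetric]) simp_all
  also have "\<dots> = eloss D (\<lambda>x y. c * L x 1 + w x y * L x (-1))"
    unfolding eloss_def using nonneg
    by (intro nn_integral_cong) (simp add: nn_integral_count_space_finite ennreal_mult add.commute)
  finally show ?thesis .
qed

lemma abs_loss_eq_weighted_bin_zo_loss:
  "abs_loss n c (h, r) x y = c * bin_zo_loss r x 1 + zo_loss n h x y * bin_zo_loss r x (-1)"
  by (simp add: abs_loss_def bin_zo_loss_def sgn01_def zo_loss_def)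

lemma lphi_loss_eq_weighted_phi_loss:
  "lphi_loss n c \<Phi> h r x y = c * phi_loss \<Phi> r x 1 + zo_loss n h x y * phi_loss \<Phi> r x (-1)"
  by (simp add: lphi_loss_def phi_loss_def zo_loss_def)

lemma bin_dist_rejection_measure:
  assumes c: "0 < c" and D: "multi_dist MX n D" and h: "h \<in> Hall MX n"
  defines "Z \<equiv> c + enn2real (eloss D (zo_loss n h))"
  shows "bin_dist MX (scale_measure (ennreal (1 / Z)) (rejection_measure MX D c (zo_loss n h)))"
proof -
  interpret D: prob_space D
    using D by (simp add: multi_dist_def)
  let ?M = "rejection_measure MX D c (zo_loss n h)"
  have "emeasure ?M (space ?M) = eloss ?M (\<lambda>_ _. 1)"
    by (simp add: eloss_def)
  also have "\<dots> = eloss D (\<lambda>x y. c + zo_loss n h x y)"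
    using c D measurable_zo_loss[OF h D]
    by (simp add: eloss_rejection_measure D.sigma_finite_measure multi_dist_def zo_loss_nonneg)
  also have "\<dots> = eloss D (\<lambda>_ _. c) + eloss D (zo_loss n h)"
    using c measurable_zo_loss[OF h D] by (intro eloss_add[symmetric]) (simp_all add: zo_loss_nonneg)
  also have "\<dots> = ennreal Z"
    using eloss_zo_loss_finite[OF D] c by (simp add: eloss_def Z_def D.emeasure_space_1)
  finally have "emeasure ?M (space ?M) = ennreal Z" .
  moreover have "0 < Z"
    using c by (simp add: Z_def add_pos_nonneg)
  ultimately show ?thesis
    by (auto intro: prob_spaceI simp: bin_dist_def space_scale_measure simp flip: ennreal_mult'')
qed

lemma excess_abs_loss_rejector_le_scaled:
  assumes c: "0 < c" and \<Phi>: "antimono \<Phi>" "\<And>t. 0 \<le> \<Phi> t"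
    and bound: "\<And>B r. bin_dist MX B \<Longrightarrow> r \<in> Rall MX \<Longrightarrow> eloss B (phi_loss \<Phi> r) < \<infinity> \<Longrightarrow>
        excess B (Rall MX) bin_zo_loss r \<le> G (excess B (Rall MX) (phi_loss \<Phi>) r)"
    and D: "multi_dist MX n D" and h: "h \<in> Hall MX n" and r: "r \<in> Rall MX"
    and finite: "eloss D (lphi_loss n c \<Phi> h r) < \<infinity>"
  obtains Z where "c \<le> Z" "Z \<le> 1 + c"
    "excess D (Rall MX) (\<lambda>r'. abs_loss n c (h, r')) r
       \<le> Z * G (excess D (Rall MX) (lphi_loss n c \<Phi> h) r / Z)"
proof -
  interpret D: prob_space D
    using D by (simp add: multi_dist_def)
  define Z where "Z = c + enn2real (eloss D (zo_loss n h))"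
  have "enn2real (eloss D (zo_loss n h)) \<le> 1"
    using enn2real_mono[OF eloss_zo_loss_le[OF D]] by simp
  then have "c \<le> Z" "Z \<le> 1 + c"
    by (simp_all add: Z_def)
  then have "0 < Z"
    using c by linarith
  define B where "B = scale_measure (ennreal (1 / Z)) (rejection_measure MX D c (zo_loss n h))"
  have "bin_dist MX B"
    unfolding B_def Z_def using c D h by (rule bin_dist_rejection_measure)
  have eloss_B: "eloss B L = ennreal (1 / Z) * eloss D (\<lambda>x y. c * L x 1 + zo_loss n h x y * L x (-1))"
    if L: "(\<lambda>z. L (fst z) (snd z)) \<in> borel_measurable (MX \<Otimes>\<^sub>M count_space {-1, 1})"
      and "\<And>x s. 0 \<le> L x s" for L
    using c D L that(2) measurable_zo_loss[OF h D]
    by (simp add: B_def eloss_def nn_integral_scale_measure measurable_cong_sets[OF sets_rejection_measure refl]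
        eloss_rejection_measure[OF D.sigma_finite_measure, unfolded eloss_def] multi_dist_def zo_loss_nonneg)
  have eloss_B_bin: "eloss B (bin_zo_loss r') = ennreal (1 / Z) * eloss D (abs_loss n c (h, r'))"
    if "r' \<in> Rall MX" for r'
    unfolding abs_loss_eq_weighted_bin_zo_loss[abs_def]
    by (rule eloss_B[OF measurable_bin_zo_loss[OF that]]) (simp add: bin_zo_loss_def)
  have eloss_B_phi: "eloss B (phi_loss \<Phi> r') = ennreal (1 / Z) * eloss D (lphi_loss n c \<Phi> h r')"
    if "r' \<in> Rall MX" for r'
    unfolding lphi_loss_eq_weighted_phi_loss[abs_def]
    by (rule eloss_B[OF measurable_phi_loss[OF \<Phi>(1) that]]) (simp add: phi_loss_def \<Phi>(2))
  have "(1 / Z) * excess D (Rall MX) (\<lambda>r'. abs_loss n c (h, r')) r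
      \<le> G ((1 / Z) * excess D (Rall MX) (lphi_loss n c \<Phi> h) r)"
    using bound[OF \<open>bin_dist MX B\<close> r] finite \<open>0 < Z\<close> r
      excess_rescale[of "1 / Z" r "Rall MX" B bin_zo_loss D] eloss_B_bin
      excess_rescale[of "1 / Z" r "Rall MX" B "phi_loss \<Phi>" D] eloss_B_phi
    by (simp add: ennreal_mult_less_top)
  then have "excess D (Rall MX) (\<lambda>r'. abs_loss n c (h, r')) r
      \<le> Z * G (excess D (Rall MX) (lphi_loss n c \<Phi> h) r / Z)"
    using \<open>0 < Z\<close> by (simp add: field_simps)
  with \<open>c \<le> Z\<close> \<open>Z \<le> 1 + c\<close> show thesis
    by (rule that)
qed

lemma excess_abs_loss_rejector_le:
  assumes c: "0 < c" and \<Phi>: "antimono \<Phi>" "\<And>t. 0 \<le> \<Phi> t" and G: "mono_on {0..} G"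
    and bound: "\<And>B r. bin_dist MX B \<Longrightarrow> r \<in> Rall MX \<Longrightarrow> eloss B (phi_loss \<Phi> r) < \<infinity> \<Longrightarrow>
        excess B (Rall MX) bin_zo_loss r \<le> G (excess B (Rall MX) (phi_loss \<Phi>) r)"
    and D: "multi_dist MX n D" and h: "h \<in> Hall MX n" and r: "r \<in> Rall MX"
    and finite: "eloss D (lphi_loss n c \<Phi> h r) < \<infinity>"
  defines "X \<equiv> excess D (Rall MX) (\<lambda>r'. abs_loss n c (h, r')) r"
    and "e \<equiv> excess D (Rall MX) (lphi_loss n c \<Phi> h) r"
  shows "X \<le> (1 + c) * G (e / c)"
    and "(\<exists>a. \<forall>t\<ge>0. G t = a * t) \<Longrightarrow> X \<le> G e"
proof -
  obtain Z where Z: "c \<le> Z" "Z \<le> 1 + c" and X_le: "X \<le> Z * G (e / Z)"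
    using excess_abs_loss_rejector_le_scaled[OF c \<Phi> bound D h r finite]
    unfolding X_def e_def by blast
  have "0 < Z"
    using Z c by linarith
  have "0 \<le> X"
    unfolding X_def using r by (rule excess_nonneg) (rule eloss_abs_loss_finite[OF D])
  with X_le have "0 \<le> Z * G (e / Z)"
    by linarith
  with \<open>0 < Z\<close> have "0 \<le> G (e / Z)"
    by (simp add: zero_le_mult_iff)
  have "0 \<le> e"
    unfolding e_def using r finite by (intro excess_nonneg)
  then have "G (e / Z) \<le> G (e / c)"
    using Z c by (intro mono_onD[OF G]) (simp_all add: frac_le)
  with \<open>0 \<le> G (e / Z)\<close> Z c have "Z * G (e / Z) \<le> (1 + c) * G (e / c)"
    by (intro mult_mono) simp_all
  with X_le show "X \<le> (1 + c) * G (e / c)"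
    by linarith
  assume "\<exists>a. \<forall>t\<ge>0. G t = a * t"
  then have "Z * G (e / Z) = G e"
    using \<open>0 \<le> e\<close> \<open>0 < Z\<close> by auto
  with X_le show "X \<le> G e"
    by linarith
qed

theorem corollary7:
  fixes MX :: "'x measure" and n :: nat and c :: real
    and sl :: "('x \<Rightarrow> nat \<Rightarrow> real) \<Rightarrow> 'x \<Rightarrow> nat \<Rightarrow> real"
    and \<Phi> :: "real \<Rightarrow> real" and G1 G2 :: "real \<Rightarrow> real"
  assumes c: "0 < c" "c < 1"
    and loss_nonneg: "\<And>h x y. sl h x y \<ge> 0"
    and \<Phi>_mono: "antimono \<Phi>"
    and \<Phi>_ge: "\<And>t. \<Phi> t \<ge> (if t \<le> 0 then 1 else 0)"
    and G1: "mono_on {0..} G1" "concave_on {0..} G1"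
    and G2: "mono_on {0..} G2" "concave_on {0..} G2"
    and bound1: "\<And>D h. multi_dist MX n D \<Longrightarrow> h \<in> Hall MX n \<Longrightarrow> eloss D (sl h) < \<infinity> \<Longrightarrow>
        excess D (Hall MX n) (zo_loss n) h \<le> G1 (excess D (Hall MX n) sl h)"
    and bound2: "\<And>B r. bin_dist MX B \<Longrightarrow> r \<in> Rall MX \<Longrightarrow> eloss B (phi_loss \<Phi> r) < \<infinity> \<Longrightarrow>
        excess B (Rall MX) bin_zo_loss r \<le> G2 (excess B (Rall MX) (phi_loss \<Phi>) r)"
    and D: "multi_dist MX n D"
    and h: "h \<in> Hall MX n" and r: "r \<in> Rall MX"
    and fin: "eloss D (sl h) < \<infinity>" "eloss D (lphi_loss n c \<Phi> h r) < \<infinity>"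
  shows "excess D (Hall MX n \<times> Rall MX) (abs_loss n c) (h, r)
           \<le> G1 (excess D (Hall MX n) sl h)
             + (1 + c) * G2 (excess D (Rall MX) (lphi_loss n c \<Phi> h) r / c)
         \<and> ((\<exists>a. \<forall>t\<ge>0. G2 t = a * t) \<longrightarrow>
            excess D (Hall MX n \<times> Rall MX) (abs_loss n c) (h, r)
              \<le> G1 (excess D (Hall MX n) sl h)
                + G2 (excess D (Rall MX) (lphi_loss n c \<Phi> h) r))"
proof -
  have \<Phi>_nonneg: "0 \<le> \<Phi> t" for t
    using \<Phi>_ge[of t] by (simp split: if_splits)
  note rejector = excess_abs_loss_rejector_le[OF c(1) \<Phi>_mono \<Phi>_nonneg G2(1) bound2 D h r fin(2)]
  have "excess D (Hall MX n \<times> Rall MX) (abs_loss n c) (h, r)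
      \<le> excess D (Rall MX) (\<lambda>r'. abs_loss n c (h, r')) r + G1 (excess D (Hall MX n) sl h)"
    using excess_abs_loss_le[OF less_imp_le[OF c(1)] D h r] bound1[OF D h fin(1)] by linarith
  with rejector show ?thesis
    by (smt (verit))
qed

end
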